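(* No randomized online algorithm for non-clairvoyant dynamic bin packing that makes zero migrations is better than $\frac{\mu}{2}$-competitive, where $\mu$ is the ratio of the longest to the shortest item duration.
   Context: Dynamic bin packing: bins have capacity $1$; items arrive online at times $a_i\ge0$ with size $s_i\in[0,1]$ and duration $d_i>0$ (only the size is revealed at arrival), present during $[a_i,a_i+d_i)$. Each item is placed on arrival into an open bin with enough remaining capacity or a new bin, and is never moved (zero migrations). Cost = total active time $\int_0^\infty(\text{number of nonempty bins at } t)\,dt$; $\mathrm{OPT}(I)=\int_0^\infty\mathrm{OPT}_t\,dt$ with $\mathrm{OPT}_t$ the minimum number of unit bins to pack the items present at time $t$. Being $\beta$-competitive means expected cost at most $\beta\,\mathrm{OPT}(I)$ on every instance. *)

theory Defs
  imports "HOL-Probability.Probability"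
begin

text \<open>An item is a triple (arrival time, size, duration).  An instance is a finite list
  of items, listed in order of arrival (ties are processed in list order).\<close>
type_synonym item = "real \<times> real \<times> real"

definition arr :: "item \<Rightarrow> real" where "arr x = fst x"
definition sz  :: "item \<Rightarrow> real" where "sz x = fst (snd x)"
definition dur :: "item \<Rightarrow> real" where "dur x = snd (snd x)"

definition valid_instance :: "item list \<Rightarrow> bool" where
  "valid_instance I \<longleftrightarrow>
     (\<forall>x\<in>set I. 0 \<le> arr x \<and> 0 \<le> sz x \<and> sz x \<le> 1 \<and> 0 < dur x) \<and>
     sorted (map arr I)"

definition duration_ratio_le :: "item list \<Rightarrow> real \<Rightarrow> bool" where
  "duration_ratio_le I \<mu> \<longleftrightarrow> (\<forall>x\<in>set I. \<forall>y\<in>set I. dur x \<le> \<mu> * dur y)"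

definition present :: "item list \<Rightarrow> nat \<Rightarrow> real \<Rightarrow> bool" where
  "present I j t \<longleftrightarrow> arr (I ! j) \<le> t \<and> t < arr (I ! j) + dur (I ! j)"

text \<open>Non-clairvoyant observation available when item i arrives: for each earlier item its
  arrival time, size, and its departure time if it has already departed; plus the arrival
  time and size of the current item.  Durations of present items are not revealed.\<close>
type_synonym observation = "(real \<times> real \<times> real option) list \<times> real \<times> real"

definition obs :: "item list \<Rightarrow> nat \<Rightarrow> observation" where
  "obs I i =
     (map (\<lambda>x. (arr x, sz x, if arr x + dur x \<le> arr (I ! i) then Some (arr x + dur x) else None))
          (take i I),
      arr (I ! i), sz (I ! i))"

text \<open>A deterministic online algorithm maps each observation to a bin label (a natural
  number); choosing a label whose bin is currently empty means opening a new bin.  Items are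
  never moved (zero migrations): item i stays in bin A (obs I i) for its whole lifetime.\<close>
definition bin_of :: "(observation \<Rightarrow> nat) \<Rightarrow> item list \<Rightarrow> nat \<Rightarrow> nat" where
  "bin_of A I i = A (obs I i)"

definition feasible_alg :: "(observation \<Rightarrow> nat) \<Rightarrow> bool" where
  "feasible_alg A \<longleftrightarrow> (\<forall>I. valid_instance I \<longrightarrow>
     (\<forall>i<length I.
        (\<Sum>j | j < i \<and> bin_of A I j = bin_of A I i \<and> present I j (arr (I ! i)). sz (I ! j))
          + sz (I ! i) \<le> 1))"

definition cost :: "(observation \<Rightarrow> nat) \<Rightarrow> item list \<Rightarrow> ennreal" where
  "cost A I = (\<integral>\<^sup>+ t. ennreal (real (card (bin_of A I ` {j. j < length I \<and> present I j t}))) \<partial>lborel)"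

definition opt_at :: "item list \<Rightarrow> real \<Rightarrow> nat" where
  "opt_at I t = (LEAST k. \<exists>f :: nat \<Rightarrow> nat.
      (\<forall>j<length I. present I j t \<longrightarrow> f j < k) \<and>
      (\<forall>b<k. (\<Sum>j | j < length I \<and> present I j t \<and> f j = b. sz (I ! j)) \<le> 1))"

definition OPT :: "item list \<Rightarrow> ennreal" where
  "OPT I = (\<integral>\<^sup>+ t. ennreal (real (opt_at I t)) \<partial>lborel)"

text \<open>A randomized zero-migration non-clairvoyant algorithm: a family of deterministic
  algorithms indexed by a random seed drawn from probability space M (oblivious adversary).\<close>
definition randomized_alg :: "'w measure \<Rightarrow> ('w \<Rightarrow> observation \<Rightarrow> nat) \<Rightarrow> bool" where
  "randomized_alg M A \<longleftrightarrow> prob_space M \<and> (\<forall>\<omega>\<in>space M. feasible_alg (A \<omega>)) \<and>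
     (\<forall>I. valid_instance I \<longrightarrow> (\<lambda>\<omega>. cost (A \<omega>) I) \<in> borel_measurable M)"

definition competitive :: "'w measure \<Rightarrow> ('w \<Rightarrow> observation \<Rightarrow> nat) \<Rightarrow> real \<Rightarrow> real \<Rightarrow> bool" where
  "competitive M A \<mu> \<beta> \<longleftrightarrow> (\<forall>I. valid_instance I \<and> duration_ratio_le I \<mu> \<longrightarrow>
     (\<integral>\<^sup>+ \<omega>. cost (A \<omega>) I \<partial>M) \<le> ennreal \<beta> * OPT I)"

end

theory Submission
  imports Defs
begin

(*
  Averaging over the m^m instances grid_instance m \<mu> f.  All m * m items have size 1/m and
  arrive at time 0, so on arrival they are indistinguishable: a zero-migration algorithm
  commits to one assignment g of the cells of an m x m grid to bins, independent of f, and
  feasibility allows at most m cells per bin.  In row r only the cell (r, f r) stays for time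
  \<mu>, all others leave at time 1.  If bin b holds s r cells of row r, a uniformly random f
  misses b with probability prod_r (1 - s r / m) <= 1 - (sum_r s r / m) / 2, so on average at
  least m / 2 bins stay open on [0, \<mu>) and the expected cost is at least \<mu> m / 2, whereas
  OPT <= m + \<mu> - 1.  Letting m grow forces \<beta> >= \<mu> / 2.
*)

lemma prod_one_minus_mult_one_plus_sum_le:
  fixes a :: "'i \<Rightarrow> real"
  assumes "finite R" and "\<And>r. r \<in> R \<Longrightarrow> 0 \<le> a r \<and> a r \<le> 1"
  shows "(\<Prod>r\<in>R. 1 - a r) * (1 + (\<Sum>r\<in>R. a r)) \<le> 1"
  using assms
proof (induction R rule: finite_induct)
  case empty
  then show ?case by simp
next
  case (insert x F)
  define P where "P = (\<Prod>r\<in>F. 1 - a r)"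
  define S where "S = (\<Sum>r\<in>F. a r)"
  have IH: "P * (1 + S) \<le> 1" and ax: "0 \<le> a x" "a x \<le> 1"
    using insert unfolding P_def S_def by auto
  have "0 \<le> P" "0 \<le> S"
    unfolding P_def S_def using insert by (auto intro: prod_nonneg sum_nonneg)
  then have "(1 - a x) * (1 + (a x + S)) * P \<le> (1 + S) * P"
    using ax by (intro mult_right_mono) (auto simp: algebra_simps)
  with IH show ?case
    using insert unfolding P_def S_def by (simp add: algebra_simps)
qed

lemma prod_one_minus_le_one_minus_half_sum:
  fixes a :: "'i \<Rightarrow> real"
  assumes "finite R" and "\<And>r. r \<in> R \<Longrightarrow> 0 \<le> a r \<and> a r \<le> 1" and "(\<Sum>r\<in>R. a r) \<le> 1"
  shows "(\<Prod>r\<in>R. 1 - a r) \<le> 1 - (\<Sum>r\<in>R. a r) / 2"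
proof -
  define x where "x = (\<Sum>r\<in>R. a r)"
  have "0 \<le> x" "x \<le> 1"
    unfolding x_def using assms by (auto intro: sum_nonneg)
  then have "1 \<le> (1 - x / 2) * (1 + x)"
    by (simp add: algebra_simps mult_left_le)
  moreover have "(\<Prod>r\<in>R. 1 - a r) * (1 + x) \<le> 1"
    unfolding x_def using assms(1,2) by (rule prod_one_minus_mult_one_plus_sum_le)
  ultimately have "(\<Prod>r\<in>R. 1 - a r) * (1 + x) \<le> (1 - x / 2) * (1 + x)"
    by linarith
  with \<open>0 \<le> x\<close> show ?thesis
    unfolding x_def by simp
qed

lemma card_PiE_hitting:
  fixes g :: "'r \<Rightarrow> 'c \<Rightarrow> 'b"
  assumes R: "finite R" and C: "finite C"
  shows "card {f \<in> PiE R (\<lambda>_. C). b \<in> (\<lambda>r. g r (f r)) ` R}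
    = card C ^ card R - (\<Prod>r\<in>R. card C - card {c \<in> C. g r c = b})"
proof -
  define P where "P = PiE R (\<lambda>_. C)"
  define Miss where "Miss = PiE R (\<lambda>r. C - {c \<in> C. g r c = b})"
  have "{f \<in> P. b \<in> (\<lambda>r. g r (f r)) ` R} = P - Miss"
    unfolding P_def Miss_def by (auto simp: PiE_iff extensional_def)
  moreover have "Miss \<subseteq> P"
    unfolding P_def Miss_def by (auto simp: PiE_iff)
  moreover have "finite Miss"
    unfolding Miss_def using R C by (simp add: finite_PiE)
  moreover have "card P = card C ^ card R"
    unfolding P_def using R by (simp add: card_PiE)
  moreover have "card Miss = (\<Prod>r\<in>R. card C - card {c \<in> C. g r c = b})"
    unfolding Miss_def using R C by (simp add: card_PiE card_Diff_subset)
  ultimately show ?thesis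
    unfolding P_def by (simp add: card_Diff_subset)
qed

lemma card_PiE_hitting_ge:
  fixes g :: "'r \<Rightarrow> 'c \<Rightarrow> 'b"
  assumes R: "finite R" and C: "finite C" "C \<noteq> {}"
    and cap: "card {(r, c) \<in> R \<times> C. g r c = b} \<le> card C"
  shows "real (card C) ^ card R * (\<Sum>r\<in>R. real (card {c \<in> C. g r c = b})) / (2 * real (card C))
      \<le> real (card {f \<in> PiE R (\<lambda>_. C). b \<in> (\<lambda>r. g r (f r)) ` R})"
proof -
  define n where "n = card C"
  define s where "s r = card {c \<in> C. g r c = b}" for r
  define a where "a r = real (s r) / real n" for r
  have n: "0 < n"
    unfolding n_def using C by (simp add: card_gt_0_iff)
  have s_le: "s r \<le> n" for r
    unfolding s_def n_def using C by (intro card_mono) auto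
  have a: "0 \<le> a r \<and> a r \<le> 1" for r
    using s_le[of r] n unfolding a_def by simp
  have "(\<Sum>r\<in>R. s r) = card (SIGMA r:R. {c \<in> C. g r c = b})"
    unfolding s_def using R C by simp
  also have "(SIGMA r:R. {c \<in> C. g r c = b}) = {(r, c) \<in> R \<times> C. g r c = b}"
    by auto
  finally have "(\<Sum>r\<in>R. s r) \<le> n"
    using cap unfolding n_def by simp
  moreover have sum_a: "(\<Sum>r\<in>R. a r) = real (\<Sum>r\<in>R. s r) / real n"
    unfolding a_def by (simp add: sum_divide_distrib)
  ultimately have sum_a_le: "(\<Sum>r\<in>R. a r) \<le> 1"
    using n by (simp del: of_nat_sum)
  have "(\<Prod>r\<in>R. n - s r) \<le> n ^ card R"
    using s_le prod_mono[of R "\<lambda>r. n - s r" "\<lambda>_. n"] by simp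
  then have "real (card {f \<in> PiE R (\<lambda>_. C). b \<in> (\<lambda>r. g r (f r)) ` R})
      = real n ^ card R - (\<Prod>r\<in>R. real n - real (s r))"
    unfolding card_PiE_hitting[OF R C(1)] s_def[symmetric] n_def[symmetric]
    using s_le by (simp add: of_nat_diff)
  also have "(\<Prod>r\<in>R. real n - real (s r)) = (\<Prod>r\<in>R. real n * (1 - a r))"
    using n unfolding a_def by (intro prod.cong) (simp_all add: field_simps)
  also have "real n ^ card R - \<dots> = real n ^ card R * (1 - (\<Prod>r\<in>R. 1 - a r))"
    by (subst prod.distrib) (simp add: right_diff_distrib)
  also have "\<dots> \<ge> real n ^ card R * ((\<Sum>r\<in>R. a r) / 2)"
    using prod_one_minus_le_one_minus_half_sum[OF R _ sum_a_le] a by (intro mult_left_mono) auto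
  finally show ?thesis
    unfolding sum_a n_def s_def by (simp flip: sum_divide_distrib)
qed

lemma sum_card_image_PiE_ge:
  fixes g :: "'r \<Rightarrow> 'c \<Rightarrow> 'b"
  assumes R: "finite R" and C: "finite C" "C \<noteq> {}"
    and cap: "\<And>b. card {(r, c) \<in> R \<times> C. g r c = b} \<le> card C"
  shows "real (card C) ^ card R * real (card R) / 2
      \<le> (\<Sum>f\<in>PiE R (\<lambda>_. C). real (card ((\<lambda>r. g r (f r)) ` R)))"
proof -
  define n where "n = card C"
  define P where "P = PiE R (\<lambda>_. C)"
  define G where "G = (\<lambda>(r, c). g r c) ` (R \<times> C)"
  define X where "X f = (\<lambda>r. g r (f r)) ` R" for f
  define s where "s b r = real (card {c \<in> C. g r c = b})" for b r
  have n: "0 < n"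
    unfolding n_def using C by (simp add: card_gt_0_iff)
  have finite: "finite P" "finite G"
    unfolding P_def G_def using R C by (simp_all add: finite_PiE)
  have row: "(\<Sum>b\<in>G. s b r) = real n" if "r \<in> R" for r
  proof -
    have "g r ` C \<subseteq> G"
      unfolding G_def using that by auto
    then have "(\<Sum>b\<in>G. card {c \<in> C. g r c = b}) = card C"
      unfolding card_eq_sum by (rule sum.group[OF C(1) finite(2)])
    then show ?thesis
      unfolding s_def n_def by (simp flip: of_nat_sum)
  qed
  have "real n ^ card R * real (card R) / 2
      = real n ^ card R * (\<Sum>r\<in>R. \<Sum>b\<in>G. s b r) / (2 * real n)"
    using n row by simp
  also have "\<dots> = (\<Sum>b\<in>G. real n ^ card R * (\<Sum>r\<in>R. s b r) / (2 * real n))"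
    by (simp add: sum.swap[of _ R] sum_distrib_left sum_divide_distrib)
  also have "\<dots> \<le> (\<Sum>b\<in>G. real (card {f \<in> P. b \<in> X f}))"
    unfolding s_def n_def P_def X_def
    by (intro sum_mono card_PiE_hitting_ge R C cap)
  also have "\<dots> = (\<Sum>b\<in>G. \<Sum>f\<in>P. of_bool (b \<in> X f))"
    using finite by (simp add: Int_def)
  also have "\<dots> = (\<Sum>f\<in>P. \<Sum>b\<in>G. of_bool (b \<in> X f))"
    by (rule sum.swap)
  also have "\<dots> = (\<Sum>f\<in>P. real (card (X f)))"
  proof (rule sum.cong)
    fix f assume "f \<in> P"
    then have "G \<inter> {b. b \<in> X f} = X f"
      unfolding P_def G_def X_def by (auto simp: PiE_iff)
    then show "(\<Sum>b\<in>G. of_bool (b \<in> X f)) = real (card (X f))"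
      using finite by simp
  qed simp
  finally show ?thesis
    unfolding n_def P_def X_def .
qed

lemma le_of_forall_mult_le_mult_add:
  fixes x y c :: real
  assumes "\<And>n::nat. 0 < n \<Longrightarrow> x * real n \<le> y * real n + c"
  shows "x \<le> y"
proof (rule ccontr)
  assume "\<not> x \<le> y"
  obtain n :: nat where "c / (x - y) < real n"
    using reals_Archimedean2 by blast
  then have "c < (x - y) * real (Suc n)"
    using \<open>\<not> x \<le> y\<close> by (simp add: divide_less_eq algebra_simps)
  with assms[of "Suc n"] show False
    by (simp add: algebra_simps)
qed

lemma grid_index_less:
  fixes r c m :: nat
  assumes "r < m" and "c < m"
  shows "r * m + c < m * m"
proof -
  have "r * m + c < Suc r * m"
    using assms(2) by simp
  also have "\<dots> \<le> m * m"
    using assms(1) by (intro mult_right_mono) simp_all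
  finally show ?thesis .
qed

lemma grid_index_div_mod:
  fixes j m :: nat
  assumes "j < m * m"
  shows "j div m < m" and "j mod m < m" and "j div m * m + j mod m = j"
proof -
  have "0 < m"
    using assms by (metis gr0I mult_0 not_less_zero)
  with assms show "j div m < m" and "j mod m < m" and "j div m * m + j mod m = j"
    by (simp_all add: less_mult_imp_div_less)
qed

lemma inj_on_grid_index: "inj_on (\<lambda>(r, c). r * m + c) (UNIV \<times> {..<m::nat})"
proof (rule inj_onI, clarsimp)
  fix r c r' c' assume "c < m" "c' < m" "r * m + c = r' * m + c'"
  moreover have "(r * m + c) div m = r" "(r * m + c) mod m = c"
    and "(r' * m + c') div m = r'" "(r' * m + c') mod m = c'"
    using \<open>c < m\<close> \<open>c' < m\<close> by simp_all
  ultimately show "r = r' \<and> c = c'"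
    by metis
qed

lemma feasible_alg_card_bin_le:
  assumes feasible: "feasible_alg A" and valid: "valid_instance I"
    and same: "\<And>x. x \<in> set I \<Longrightarrow> arr x = a \<and> sz x = s"
  shows "real (card {j. j < length I \<and> bin_of A I j = b}) * s \<le> 1"
proof -
  define S where "S = {j. j < length I \<and> bin_of A I j = b}"
  have item: "arr (I ! j) = a" "sz (I ! j) = s" "0 < dur (I ! j)" if "j < length I" for j
    using same[OF nth_mem[OF that]] valid nth_mem[OF that] unfolding valid_instance_def by auto
  show ?thesis
  proof (cases "S = {}")
    case True
    then have "card {j. j < length I \<and> bin_of A I j = b} = 0"
      unfolding S_def by simp
    then show ?thesis
      by (metis of_nat_0 mult_zero_left zero_le_one)
  next
    case False
    \<comment> \<open>When the last item i of bin b arrives, all earlier items of b are still present.\<close>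
    define i where "i = Max S"
    have "finite S"
      unfolding S_def by simp
    then have i: "i \<in> S" and le_i: "\<And>j. j \<in> S \<Longrightarrow> j \<le> i"
      unfolding i_def using False by simp_all
    have "i < length I"
      using i unfolding S_def by simp
    then have "(\<Sum>j | j < i \<and> bin_of A I j = bin_of A I i \<and> present I j (arr (I ! i)). sz (I ! j))
        + sz (I ! i) \<le> 1"
      using feasible valid unfolding feasible_alg_def by blast
    moreover have "{j. j < i \<and> bin_of A I j = bin_of A I i \<and> present I j (arr (I ! i))} = S - {i}"
      using i le_i unfolding S_def present_def by (force simp: item)
    ultimately have "(\<Sum>j\<in>S - {i}. sz (I ! j)) + sz (I ! i) \<le> 1"
      by simp
    moreover have "(\<Sum>j\<in>S - {i}. sz (I ! j)) = real (card (S - {i})) * s"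
      by (simp add: S_def item)
    moreover have "real (card S) = real (card (S - {i})) + 1"
      by (simp flip: card_Suc_Diff1[OF \<open>finite S\<close> i])
    ultimately show ?thesis
      using \<open>i < length I\<close> item(2) unfolding S_def[symmetric] by (simp add: algebra_simps)
  qed
qed

lemma cost_ge_card_bin_of_present:
  assumes "J \<subseteq> {..<length I}" and "\<And>j t. j \<in> J \<Longrightarrow> a \<le> t \<Longrightarrow> t < b \<Longrightarrow> present I j t"
    and "a \<le> b"
  shows "ennreal ((b - a) * real (card (bin_of A I ` J))) \<le> cost A I"
proof -
  define c where "c = real (card (bin_of A I ` J))"
  have "ennreal ((b - a) * c) = ennreal c * emeasure lborel {a..<b}"
    using assms(3) unfolding c_def by (simp add: ennreal_mult[symmetric] mult.commute)
  also have "\<dots> = (\<integral>\<^sup>+ t. ennreal c * indicator {a..<b} t \<partial>lborel)"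
    by (simp add: nn_integral_cmult_indicator)
  also have "\<dots> \<le> cost A I"
    unfolding cost_def
  proof (rule nn_integral_mono)
    fix t
    show "ennreal c * indicator {a..<b} t
      \<le> ennreal (real (card (bin_of A I ` {j. j < length I \<and> present I j t})))"
    proof (cases "t \<in> {a..<b}")
      case True
      then have "bin_of A I ` J \<subseteq> bin_of A I ` {j. j < length I \<and> present I j t}"
        using assms(1,2) by auto
      then show ?thesis
        using True unfolding c_def by (simp add: card_mono)
    qed simp
  qed
  finally show ?thesis
    unfolding c_def .
qed

lemma opt_at_le_packing:
  assumes "\<And>j. j < length I \<Longrightarrow> present I j t \<Longrightarrow> h j < k"
    and "\<And>b. b < k \<Longrightarrow> (\<Sum>j | j < length I \<and> present I j t \<and> h j = b. sz (I ! j)) \<le> 1"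
  shows "opt_at I t \<le> k"
  unfolding opt_at_def by (rule Least_le) (use assms in blast)

(* Item r * m + c is cell (r, c) of an m x m grid; only the cell (r, f r) of row r is long-lived. *)
definition grid_instance :: "nat \<Rightarrow> real \<Rightarrow> (nat \<Rightarrow> nat) \<Rightarrow> item list" where
  "grid_instance m \<mu> f =
     map (\<lambda>j. (0, 1 / real m, if j mod m = f (j div m) then \<mu> else 1)) [0..<m * m]"

lemma length_grid_instance [simp]: "length (grid_instance m \<mu> f) = m * m"
  by (simp add: grid_instance_def)

lemma grid_instance_nth [simp]:
  assumes "j < m * m"
  shows "arr (grid_instance m \<mu> f ! j) = 0"
    and "sz (grid_instance m \<mu> f ! j) = 1 / real m"
    and "dur (grid_instance m \<mu> f ! j) = (if j mod m = f (j div m) then \<mu> else 1)"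
  using assms by (simp_all add: grid_instance_def arr_def sz_def dur_def)

lemma set_grid_instance:
  "x \<in> set (grid_instance m \<mu> f) \<Longrightarrow> arr x = 0 \<and> sz x = 1 / real m \<and> (dur x = 1 \<or> dur x = \<mu>)"
  by (auto simp: grid_instance_def arr_def sz_def dur_def)

lemma present_grid_instance:
  "j < m * m \<Longrightarrow>
    present (grid_instance m \<mu> f) j t \<longleftrightarrow> 0 \<le> t \<and> t < (if j mod m = f (j div m) then \<mu> else 1)"
  by (simp add: present_def)

lemma valid_grid_instance:
  assumes "0 < \<mu>"
  shows "valid_instance (grid_instance m \<mu> f)"
proof -
  have "map arr (grid_instance m \<mu> f) = replicate (m * m) 0"
    by (simp add: grid_instance_def arr_def o_def map_replicate_const)
  moreover have "1 / real m \<le> 1"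
    by (cases m) simp_all
  ultimately show ?thesis
    unfolding valid_instance_def using assms by (auto dest!: set_grid_instance)
qed

lemma duration_ratio_le_grid_instance:
  assumes "1 \<le> \<mu>"
  shows "duration_ratio_le (grid_instance m \<mu> f) \<mu>"
  unfolding duration_ratio_le_def
proof (intro ballI)
  fix x y
  assume "x \<in> set (grid_instance m \<mu> f)" and "y \<in> set (grid_instance m \<mu> f)"
  then have "dur x \<le> \<mu>" and "1 \<le> dur y"
    using assms by (auto dest!: set_grid_instance)
  moreover have "\<mu> \<le> \<mu> * dur y"
    using assms \<open>1 \<le> dur y\<close> by (simp add: mult_le_cancel_left1)
  ultimately show "dur x \<le> \<mu> * dur y"
    by linarith
qed

lemma obs_grid_instance:
  assumes "0 < \<mu>" and "i < m * m"
  shows "obs (grid_instance m \<mu> f) i = (replicate i (0, 1 / real m, None), 0, 1 / real m)"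
proof -
  have "map (\<lambda>x. (arr x, sz x, if arr x + dur x \<le> 0 then Some (arr x + dur x) else None))
      (take i (grid_instance m \<mu> f)) = replicate i (0, 1 / real m, None)"
    using assms by (auto simp: list_eq_iff_nth_eq)
  with assms show ?thesis
    unfolding obs_def by simp
qed

lemma bin_of_grid_instance:
  "0 < \<mu> \<Longrightarrow> j < m * m \<Longrightarrow> bin_of A (grid_instance m \<mu> f) j = bin_of A (grid_instance m \<mu> f') j"
  by (simp only: bin_of_def obs_grid_instance)

lemma sum_sz_grid_instance_le_one:
  assumes "S \<subseteq> {..<m * m}" and "card S \<le> m"
  shows "(\<Sum>j\<in>S. sz (grid_instance m \<mu> f ! j)) \<le> 1"
proof -
  have "(\<Sum>j\<in>S. sz (grid_instance m \<mu> f ! j)) = (\<Sum>j\<in>S. 1 / real m)"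
    using assms(1) by (intro sum.cong) auto
  also have "\<dots> \<le> 1"
    using assms(2) by (cases "m = 0") simp_all
  finally show ?thesis .
qed

lemma opt_at_grid_instance_le_m: "opt_at (grid_instance m \<mu> f) t \<le> m"
proof (rule opt_at_le_packing[where h = "\<lambda>j. j div m"])
  let ?I = "grid_instance m \<mu> f"
  show "j div m < m" if "j < length ?I" for j
    using that by (simp add: less_mult_imp_div_less)
  fix r
  have "{j. j < m * m \<and> present ?I j t \<and> j div m = r} \<subseteq> (\<lambda>c. r * m + c) ` {..<m}"
  proof
    fix j assume "j \<in> {j. j < m * m \<and> present ?I j t \<and> j div m = r}"
    with grid_index_div_mod[of j m] show "j \<in> (\<lambda>c. r * m + c) ` {..<m}"
      by (intro image_eqI[where x = "j mod m"]) auto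
  qed
  then have "card {j. j < m * m \<and> present ?I j t \<and> j div m = r} \<le> m"
    using surj_card_le[of "{..<m}"] by fastforce
  then show "(\<Sum>j | j < length ?I \<and> present ?I j t \<and> j div m = r. sz (?I ! j)) \<le> 1"
    by (intro sum_sz_grid_instance_le_one) auto
qed

lemma opt_at_grid_instance_le_one:
  assumes "1 \<le> t"
  shows "opt_at (grid_instance m \<mu> f) t \<le> 1"
proof (rule opt_at_le_packing[where h = "\<lambda>_. 0"])
  let ?I = "grid_instance m \<mu> f"
  have "{j. j < m * m \<and> present ?I j t} \<subseteq> (\<lambda>r. r * m + f r) ` {..<m}"
  proof
    fix j assume j: "j \<in> {j. j < m * m \<and> present ?I j t}"
    then have "j mod m = f (j div m)"
      using assms by (auto simp: present_grid_instance split: if_splits)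
    with j grid_index_div_mod[of j m] show "j \<in> (\<lambda>r. r * m + f r) ` {..<m}"
      by (intro image_eqI[where x = "j div m"]) auto
  qed
  then have "card {j. j < m * m \<and> present ?I j t} \<le> m"
    using surj_card_le[of "{..<m}"] by fastforce
  then show "(\<Sum>j | j < length ?I \<and> present ?I j t \<and> 0 = b. sz (?I ! j)) \<le> 1" if "b < 1" for b :: nat
    using that by (intro sum_sz_grid_instance_le_one) auto
qed simp

lemma opt_at_eq_0:
  assumes "\<And>j. j < length I \<Longrightarrow> \<not> present I j t"
  shows "opt_at I t = 0"
  using opt_at_le_packing[of I t "\<lambda>_. 0" 0] assms by simp

lemma OPT_grid_instance_le:
  assumes "1 \<le> \<mu>"
  shows "OPT (grid_instance m \<mu> f) \<le> ennreal (real m + (\<mu> - 1))"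
proof -
  have "OPT (grid_instance m \<mu> f)
      \<le> (\<integral>\<^sup>+ t. ennreal (real m) * indicator {0..<1} t + indicator {1..<\<mu>} t \<partial>lborel)"
    unfolding OPT_def
  proof (rule nn_integral_mono)
    fix t :: real
    have "opt_at (grid_instance m \<mu> f) t = 0" if "t \<notin> {0..<1}" "t \<notin> {1..<\<mu>}"
      using that assms by (intro opt_at_eq_0) (auto simp: present_grid_instance)
    then show "ennreal (real (opt_at (grid_instance m \<mu> f) t))
        \<le> ennreal (real m) * indicator {0..<1} t + indicator {1..<\<mu>} t"
      using opt_at_grid_instance_le_m[of m \<mu> f t] opt_at_grid_instance_le_one[of t m \<mu> f]
      by (auto simp: indicator_def)
  qed
  also have "\<dots> = ennreal (real m) * emeasure lborel {0..<1::real} + emeasure lborel {1..<\<mu>}"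
    by (simp add: nn_integral_add nn_integral_cmult_indicator)
  also have "\<dots> = ennreal (real m + (\<mu> - 1))"
    using assms by (simp add: ennreal_plus)
  finally show ?thesis .
qed

lemma card_grid_cells_per_bin_le:
  assumes "feasible_alg A" and "0 < m" and "0 < \<mu>"
  shows "card {(r, c) \<in> {..<m} \<times> {..<m}. bin_of A (grid_instance m \<mu> f) (r * m + c) = b} \<le> m"
proof -
  let ?I = "grid_instance m \<mu> f"
  let ?cells = "{(r, c) \<in> {..<m} \<times> {..<m}. bin_of A ?I (r * m + c) = b}"
  have "(\<lambda>(r, c). r * m + c) ` ?cells \<subseteq> {j. j < length ?I \<and> bin_of A ?I j = b}"
    by (auto intro: grid_index_less)
  moreover have "inj_on (\<lambda>(r, c). r * m + c) ?cells"
    by (rule inj_on_subset[OF inj_on_grid_index]) auto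
  ultimately have "card ?cells \<le> card {j. j < length ?I \<and> bin_of A ?I j = b}"
    by (intro card_inj_on_le) auto
  moreover have "real (card {j. j < length ?I \<and> bin_of A ?I j = b}) * (1 / real m) \<le> 1"
    using assms(1) valid_grid_instance[OF assms(3)]
    by (rule feasible_alg_card_bin_le) (simp add: set_grid_instance)
  ultimately show ?thesis
    using assms(2) by simp
qed

lemma cost_grid_instance_ge:
  assumes "0 < \<mu>" and f: "f \<in> PiE {..<m} (\<lambda>_. {..<m})"
  shows "ennreal (\<mu> * real (card ((\<lambda>r. bin_of A (grid_instance m \<mu> f) (r * m + f r)) ` {..<m})))
    \<le> cost A (grid_instance m \<mu> f)"
proof -
  let ?long = "(\<lambda>r. r * m + f r) ` {..<m}"
  have long: "r * m + f r < m * m" "(r * m + f r) div m = r" "(r * m + f r) mod m = f r"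
    if "r < m" for r
    using f that grid_index_less[of r m "f r"] by (auto simp: PiE_iff)
  have "ennreal ((\<mu> - 0) * real (card (bin_of A (grid_instance m \<mu> f) ` ?long)))
      \<le> cost A (grid_instance m \<mu> f)"
    using long assms(1) by (intro cost_ge_card_bin_of_present) (auto simp: present_grid_instance)
  then show ?thesis
    by (simp add: image_image)
qed

lemma sum_cost_grid_instance_ge:
  assumes feasible: "feasible_alg A" and "0 < m" and "1 \<le> \<mu>"
  shows "ennreal (\<mu> * (real m ^ m * real m / 2))
    \<le> (\<Sum>f\<in>PiE {..<m} (\<lambda>_. {..<m}). cost A (grid_instance m \<mu> f))"
proof -
  define F where "F = PiE {..<m} (\<lambda>_. {..<m::nat})"
  define g where "g r c = bin_of A (grid_instance m \<mu> (\<lambda>_. 0)) (r * m + c)" for r c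
  have "0 < \<mu>"
    using assms(3) by simp
  have cap: "card {(r, c) \<in> {..<m} \<times> {..<m}. g r c = b} \<le> card {..<m}" for b
    unfolding g_def using card_grid_cells_per_bin_le[OF feasible \<open>0 < m\<close> \<open>0 < \<mu>\<close>] by simp
  have "real m ^ m * real m / 2 \<le> (\<Sum>f\<in>F. real (card ((\<lambda>r. g r (f r)) ` {..<m})))"
    using sum_card_image_PiE_ge[OF finite_lessThan finite_lessThan _ cap] \<open>0 < m\<close>
    unfolding F_def by auto
  then have "ennreal (\<mu> * (real m ^ m * real m / 2))
      \<le> ennreal (\<mu> * (\<Sum>f\<in>F. real (card ((\<lambda>r. g r (f r)) ` {..<m}))))"
    using assms(3) by (intro ennreal_leI mult_left_mono) auto
  also have "\<dots> = (\<Sum>f\<in>F. ennreal (\<mu> * real (card ((\<lambda>r. g r (f r)) ` {..<m}))))"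
    unfolding sum_distrib_left using assms(3) by (intro sum_ennreal[symmetric]) simp
  also have "\<dots> \<le> (\<Sum>f\<in>F. cost A (grid_instance m \<mu> f))"
  proof (rule sum_mono)
    fix f assume f: "f \<in> F"
    then have "(\<lambda>r. g r (f r)) ` {..<m} = (\<lambda>r. bin_of A (grid_instance m \<mu> f) (r * m + f r)) ` {..<m}"
      unfolding g_def F_def using grid_index_less bin_of_grid_instance[OF \<open>0 < \<mu>\<close>]
      by (intro image_cong) (auto simp: PiE_iff)
    with f show "ennreal (\<mu> * real (card ((\<lambda>r. g r (f r)) ` {..<m}))) \<le> cost A (grid_instance m \<mu> f)"
      unfolding F_def using cost_grid_instance_ge[OF \<open>0 < \<mu>\<close>] by simp
  qed
  finally show ?thesis
    unfolding F_def .
qed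

lemma sum_expected_cost_grid_instance_ge:
  assumes "randomized_alg M A" and "0 < m" and "1 \<le> \<mu>"
  shows "ennreal (\<mu> * (real m ^ m * real m / 2))
    \<le> (\<Sum>f\<in>PiE {..<m} (\<lambda>_. {..<m}). \<integral>\<^sup>+ \<omega>. cost (A \<omega>) (grid_instance m \<mu> f) \<partial>M)"
proof -
  have "prob_space M" and feasible: "\<And>\<omega>. \<omega> \<in> space M \<Longrightarrow> feasible_alg (A \<omega>)"
    and measurable: "\<And>I. valid_instance I \<Longrightarrow> (\<lambda>\<omega>. cost (A \<omega>) I) \<in> borel_measurable M"
    using assms(1) unfolding randomized_alg_def by auto
  have "ennreal (\<mu> * (real m ^ m * real m / 2))
      = (\<integral>\<^sup>+ \<omega>. ennreal (\<mu> * (real m ^ m * real m / 2)) \<partial>M)"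
    using prob_space.emeasure_space_1[OF \<open>prob_space M\<close>] by simp
  also have "\<dots> \<le> (\<integral>\<^sup>+ \<omega>. (\<Sum>f\<in>PiE {..<m} (\<lambda>_. {..<m}). cost (A \<omega>) (grid_instance m \<mu> f)) \<partial>M)"
    using feasible sum_cost_grid_instance_ge assms(2,3) by (intro nn_integral_mono) blast
  also have "\<dots> = (\<Sum>f\<in>PiE {..<m} (\<lambda>_. {..<m}). \<integral>\<^sup>+ \<omega>. cost (A \<omega>) (grid_instance m \<mu> f) \<partial>M)"
    using assms(3) by (intro nn_integral_sum measurable valid_grid_instance) simp
  finally show ?thesis .
qed

lemma competitive_grid_bound:
  assumes "randomized_alg M A" and comp: "competitive M A \<mu> \<beta>" and "1 \<le> \<mu>" and "0 < m"
  shows "\<mu> * real m / 2 \<le> max \<beta> 0 * (real m + (\<mu> - 1))"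
proof -
  define F where "F = PiE {..<m} (\<lambda>_. {..<m::nat})"
  define B where "B = max \<beta> 0 * (real m + (\<mu> - 1))"
  have "ennreal (\<mu> * (real m ^ m * real m / 2))
      \<le> (\<Sum>f\<in>F. \<integral>\<^sup>+ \<omega>. cost (A \<omega>) (grid_instance m \<mu> f) \<partial>M)"
    unfolding F_def using assms(1,4,3) by (rule sum_expected_cost_grid_instance_ge)
  also have "\<dots> \<le> (\<Sum>f\<in>F. ennreal \<beta> * OPT (grid_instance m \<mu> f))"
    using comp valid_grid_instance duration_ratio_le_grid_instance[OF \<open>1 \<le> \<mu>\<close>] \<open>1 \<le> \<mu>\<close>
    unfolding competitive_def by (intro sum_mono) auto
  also have "\<dots> \<le> (\<Sum>f\<in>F. ennreal B)"
  proof (rule sum_mono)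
    fix f
    have "ennreal \<beta> = ennreal (max \<beta> 0)"
      by (metis ennreal_max_0 max.commute)
    then have "ennreal \<beta> * OPT (grid_instance m \<mu> f) \<le> ennreal (max \<beta> 0) * ennreal (real m + (\<mu> - 1))"
      using OPT_grid_instance_le[OF \<open>1 \<le> \<mu>\<close>] by (simp add: mult_left_mono)
    also have "\<dots> = ennreal B"
      unfolding B_def using \<open>1 \<le> \<mu>\<close> by (simp add: ennreal_mult)
    finally show "ennreal \<beta> * OPT (grid_instance m \<mu> f) \<le> ennreal B" .
  qed
  also have "\<dots> = ennreal (real m ^ m * B)"
    unfolding F_def using \<open>1 \<le> \<mu>\<close> by (simp add: card_PiE B_def ennreal_mult ennreal_of_nat_eq_real_of_nat)
  finally have "\<mu> * (real m ^ m * real m / 2) \<le> real m ^ m * B"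
    using \<open>1 \<le> \<mu>\<close> by (subst (asm) ennreal_le_iff) (auto simp: B_def)
  then have "real m ^ m * (\<mu> * real m / 2) \<le> real m ^ m * B"
    by (simp add: algebra_simps)
  then show ?thesis
    unfolding B_def[symmetric] using \<open>0 < m\<close> by (simp add: mult_le_cancel_left_pos)
qed

theorem lemma24:
  fixes M :: "'w measure" and A :: "'w \<Rightarrow> observation \<Rightarrow> nat" and \<mu> \<beta> :: real
  assumes "randomized_alg M A" and "1 \<le> \<mu>" and "\<beta> < \<mu> / 2"
  shows "\<not> competitive M A \<mu> \<beta>"
proof
  assume "competitive M A \<mu> \<beta>"
  then have "\<mu> / 2 * real m \<le> max \<beta> 0 * real m + max \<beta> 0 * (\<mu> - 1)" if "0 < m" for m
    using competitive_grid_bound[OF assms(1) _ assms(2) that] by (simp add: algebra_simps)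
  then have "\<mu> / 2 \<le> max \<beta> 0"
    by (rule le_of_forall_mult_le_mult_add)
  with assms(2,3) show False
    by linarith
qed

end
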